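(* Let $n\ge 1$ and suppose that the tuples $(Y_i(1),Y_i(0),X_i)$, $i=1,\dots,n$, are drawn IID, with $X_i\in\mathbb{R}^d$ and real-valued potential outcomes with finite means. Let $X=(X_1,\dots,X_n)$ and define $g\in\mathbb{R}^n$ by $g_i=\mathbb{E}[Y_i(1)+Y_i(0)\mid X_i]$. Let $\mathcal{S}\subseteq\{1,\dots,n\}$ be a solution of the problem $$\max_{S\subseteq\{1,\dots,n\}}\ \sum_{i\in S} g_i\quad\text{subject to}\quad \sum_{i\in S} g_i\le \tfrac12\sum_{i=1}^n g_i ,$$ and consider the design in which a single $Z^*\sim\mathrm{Bern}(1/2)$ is drawn independently of the potential outcomes (given $X$) and $Z_i=Z^*$ for $i\in\mathcal{S}$, $Z_i=1-Z^*$ for $i\in\mathcal{S}^c$. Let $\hat\tau_n=\frac{2}{n}\sum_{i=1}^n\big(Y_iZ_i-Y_i(1-Z_i)\big)$ with $Y_i=Y_i(Z_i)$, and $\tau_n=\frac1n\sum_{i=1}^n\mathbb{E}[Y_i(1)-Y_i(0)\mid X_i]$. Suppose that $\sum_{i\in\mathcal{S}}g_i=\sum_{i\in\mathcal{S}^c}g_i$. Then, with $z\in\{0,1\}^n$ defined by $z_i=\mathbb{1}\{i\in\mathcal{S}\}$ and $\mathbf{1}_n$ the all-ones vector, $$\mathbb{E}[\hat\tau_n\mid X,Z=z]=\mathbb{E}[\hat\tau_n\mid X,Z=\mathbf{1}_n-z].$$ Hence $\mathrm{Var}(\mathbb{E}[\hat\tau_n\mid X,Z]\mid X)=0$, and $\mathbb{E}[\hat\tau_n\mid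 X,Z]=\tau_n$ with probability one in $Z$.
   Context: Potential outcomes framework with SUTVA: unit $i$'s observed outcome is $Y_i=Y_i(Z_i)$, where $Z_i\in\{0,1\}$ is the treatment indicator. The treatment vector $Z$ is conditionally independent of all potential outcomes given the covariates $X$, and each $Z_i$ is marginally $\mathrm{Bern}(1/2)$. *)

theory Defs
  imports "HOL-Probability.Probability"
begin

definition gen_sets :: "'a measure \<Rightarrow> ('i \<Rightarrow> 'a \<Rightarrow> 'b) \<Rightarrow> 'b measure \<Rightarrow> 'i set \<Rightarrow> 'a set set" where
  "gen_sets M f N I = (\<Union>i\<in>I. {f i -` A \<inter> space M | A. A \<in> sets N})"

definition sigma_gen :: "'a measure \<Rightarrow> ('i \<Rightarrow> 'a \<Rightarrow> 'b) \<Rightarrow> 'b measure \<Rightarrow> 'i set \<Rightarrow> 'a measure" where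
  "sigma_gen M f N I = sigma (space M) (gen_sets M f N I)"

definition design_Z :: "('a \<Rightarrow> bool) \<Rightarrow> ('a \<Rightarrow> nat set) \<Rightarrow> nat \<Rightarrow> 'a \<Rightarrow> real" where
  "design_Z Zs S i \<omega> = (if Zs \<omega> then of_bool (i \<in> S \<omega>) else 1 - of_bool (i \<in> S \<omega>))"

definition obs_Y :: "(nat \<Rightarrow> 'a \<Rightarrow> real) \<Rightarrow> (nat \<Rightarrow> 'a \<Rightarrow> real) \<Rightarrow> (nat \<Rightarrow> 'a \<Rightarrow> real) \<Rightarrow> nat \<Rightarrow> 'a \<Rightarrow> real" where
  "obs_Y Y1 Y0 Z i \<omega> = (if Z i \<omega> = 1 then Y1 i \<omega> else Y0 i \<omega>)"

definition tau_hat :: "nat \<Rightarrow> (nat \<Rightarrow> 'a \<Rightarrow> real) \<Rightarrow> (nat \<Rightarrow> 'a \<Rightarrow> real) \<Rightarrow> 'a \<Rightarrow> real" where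
  "tau_hat n Y Z \<omega> = 2 / real n * (\<Sum>i=1..n. Y i \<omega> * Z i \<omega> - Y i \<omega> * (1 - Z i \<omega>))"

definition cond_exp_on_event :: "'a measure \<Rightarrow> 'a measure \<Rightarrow> 'a set \<Rightarrow> ('a \<Rightarrow> real) \<Rightarrow> 'a \<Rightarrow> real" where
  "cond_exp_on_event M F A f \<omega> =
     real_cond_exp M F (\<lambda>x. indicator A x * f x) \<omega> / real_cond_exp M F (indicator A) \<omega>"

definition cond_var :: "'a measure \<Rightarrow> 'a measure \<Rightarrow> ('a \<Rightarrow> real) \<Rightarrow> 'a \<Rightarrow> real" where
  "cond_var M F W \<omega> = real_cond_exp M F (\<lambda>x. (W x - real_cond_exp M F W x)\<^sup>2) \<omega>"

end

theory Submission
  imports Defs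
begin

(*
  Given X, the design draws a single fair coin Z*, independent of the potential outcomes, and the
  estimator equals T1 on {Z* = 1} and T0 on {Z* = 0}, where T1 and T0 are functions of the units
  (Y_i(1), Y_i(0), X_i) and of the X-measurable set S. Adjoining an independent event to sigma(X)
  does not change conditional expectations of such functions, so
    E[tau_hat | X, Z] = 1{Z* = 1} E[T1 | X] + 1{Z* = 0} E[T0 | X],
  whose conditional variance given X is (E[T1 | X] - E[T0 | X])^2 / 4. Independence across units
  gives E[Y_i(z) | X] = E[Y_i(z) | X_i], hence
    E[T1 | X] - E[T0 | X] = (2/n) (sum_{i in S} g_i - sum_{i not in S} g_i),
    E[T1 | X] + E[T0 | X] = 2 tau_n,
  and under the balance condition both conditional means equal tau_n.
*)

section \<open>Generated sigma-algebras\<close>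

lemma sigma_sets_Un_sigma_sets:
  "sigma_sets \<Omega> (sigma_sets \<Omega> A \<union> sigma_sets \<Omega> B) = sigma_sets \<Omega> (A \<union> B)"
proof (rule antisym)
  have "sigma_sets \<Omega> A \<union> sigma_sets \<Omega> B \<subseteq> sigma_sets \<Omega> (A \<union> B)"
    by (simp add: sigma_sets_subseteq)
  then show "sigma_sets \<Omega> (sigma_sets \<Omega> A \<union> sigma_sets \<Omega> B) \<subseteq> sigma_sets \<Omega> (A \<union> B)"
    by (rule sigma_sets_mono)
qed (rule sigma_sets_subseteq, auto)

lemma sigma_sets_Un_eq_Int:
  assumes "space F = \<Omega>" "space H = \<Omega>"
  shows "sigma_sets \<Omega> (sets F \<union> sets H) = sigma_sets \<Omega> {a \<inter> b | a b. a \<in> sets F \<and> b \<in> sets H}"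
proof (rule antisym)
  have "c \<in> {a \<inter> b | a b. a \<in> sets F \<and> b \<in> sets H}" if "c \<in> sets F \<union> sets H" for c
  proof -
    have "c = c \<inter> \<Omega>" "c = \<Omega> \<inter> c" "\<Omega> \<in> sets F" "\<Omega> \<in> sets H"
      using that sets.sets_into_space sets.top[of F] sets.top[of H] assms by auto
    then show ?thesis
      using that by blast
  qed
  then show "sigma_sets \<Omega> (sets F \<union> sets H) \<subseteq> sigma_sets \<Omega> {a \<inter> b | a b. a \<in> sets F \<and> b \<in> sets H}"
    by (intro sigma_sets_mono subsetI sigma_sets.Basic)
next
  have "sets F \<union> sets H \<subseteq> Pow \<Omega>"
    using sets.space_closed[of F] sets.space_closed[of H] assms by auto
  then interpret sigma_algebra \<Omega> "sigma_sets \<Omega> (sets F \<union> sets H)"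
    by (rule sigma_algebra_sigma_sets)
  show "sigma_sets \<Omega> {a \<inter> b | a b. a \<in> sets F \<and> b \<in> sets H} \<subseteq> sigma_sets \<Omega> (sets F \<union> sets H)"
    by (rule sigma_sets_mono) (auto intro: sigma_sets.Basic)
qed

lemma Int_stable_Int_sets: "Int_stable {a \<inter> b | a b. a \<in> sets F \<and> b \<in> sets H}"
proof (rule Int_stableI)
  fix p q assume "p \<in> {a \<inter> b | a b. a \<in> sets F \<and> b \<in> sets H}" "q \<in> {a \<inter> b | a b. a \<in> sets F \<and> b \<in> sets H}"
  then obtain a b a' b' where ab: "a \<in> sets F" "b \<in> sets H" "a' \<in> sets F" "b' \<in> sets H"
    and "p = a \<inter> b" "q = a' \<inter> b'"
    by blast
  then have "p \<inter> q = (a \<inter> a') \<inter> (b \<inter> b')"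
    by blast
  moreover have "a \<inter> a' \<in> sets F" "b \<inter> b' \<in> sets H"
    using ab by auto
  ultimately show "p \<inter> q \<in> {a \<inter> b | a b. a \<in> sets F \<and> b \<in> sets H}"
    by blast
qed

lemma subalgebra_sigma: "A \<subseteq> sets M \<Longrightarrow> subalgebra M (sigma (space M) A)"
  unfolding subalgebra_def
  by (simp add: space_measure_of_conv sets_measure_of[OF subset_trans[OF _ sets.space_closed]]
      sets.sigma_sets_subset)

lemma gen_sets_Pow: "gen_sets M f N I \<subseteq> Pow (space M)"
  unfolding gen_sets_def by auto

lemma gen_sets_Un: "gen_sets M f N (I \<union> J) = gen_sets M f N I \<union> gen_sets M f N J"
  unfolding gen_sets_def by blast

lemma gen_sets_subset_sets:
  assumes "space M' = space M" and "\<And>i. i \<in> I \<Longrightarrow> f i \<in> measurable M' N"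
  shows "gen_sets M f N I \<subseteq> sets M'"
proof -
  have "f i -` A \<inter> space M \<in> sets M'" if "i \<in> I" "A \<in> sets N" for i A
    using measurable_sets[OF assms(2)[OF that(1)] that(2)] assms(1) by simp
  then show ?thesis
    unfolding gen_sets_def by blast
qed

lemma space_sigma_gen [simp]: "space (sigma_gen M f N I) = space M"
  unfolding sigma_gen_def by (simp add: space_measure_of_conv)

lemma sets_sigma_gen: "sets (sigma_gen M f N I) = sigma_sets (space M) (gen_sets M f N I)"
  unfolding sigma_gen_def by (rule sets_measure_of[OF gen_sets_Pow])

lemma sets_sigma_gen_subset:
  assumes "space M' = space M" and "\<And>i. i \<in> I \<Longrightarrow> f i \<in> measurable M' N"
  shows "sets (sigma_gen M f N I) \<subseteq> sets M'"
  unfolding sets_sigma_gen using sets.sigma_sets_subset[OF gen_sets_subset_sets[OF assms]] assms(1)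
  by simp

lemma sigma_gen_Un:
  "sigma_gen M f N (I \<union> J) = sigma (space M) (sets (sigma_gen M f N I) \<union> sets (sigma_gen M f N J))"
proof -
  have "sets (sigma_gen M f N I) \<union> sets (sigma_gen M f N J) \<subseteq> Pow (space M)"
    using sets.space_closed[of "sigma_gen M f N I"] sets.space_closed[of "sigma_gen M f N J"] by simp
  then show ?thesis
    unfolding sigma_gen_def[of M f N "I \<union> J"]
    by (rule sigma_eqI[OF gen_sets_Pow])
      (simp add: sets_sigma_gen gen_sets_Un sigma_sets_Un_sigma_sets)
qed

lemma measurable_sigma_gen_sets:
  assumes "gen_sets M f N I \<subseteq> A" "A \<subseteq> Pow (space M)" "i \<in> I" "f i \<in> space M \<rightarrow> space N"
  shows "f i \<in> measurable (sigma (space M) A) N"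
proof (rule measurableI)
  fix B assume "B \<in> sets N"
  then have "f i -` B \<inter> space M \<in> A"
    using assms(1,3) unfolding gen_sets_def by blast
  then show "f i -` B \<inter> space (sigma (space M) A) \<in> sets (sigma (space M) A)"
    using assms(2) by (simp add: space_measure_of_conv sets_measure_of sigma_sets.Basic)
qed (use assms(4) in \<open>auto simp: space_measure_of_conv\<close>)

lemma measurable_triple_components:
  fixes V :: "'a \<Rightarrow> real \<times> real \<times> 'b::topological_space"
  assumes "V \<in> measurable N borel"
  shows "(\<lambda>x. fst (V x)) \<in> borel_measurable N" and "(\<lambda>x. fst (snd (V x))) \<in> borel_measurable N"
    and "(\<lambda>x. snd (snd (V x))) \<in> borel_measurable N"
  by (rule measurable_compose[OF assms], intro borel_measurable_continuous_onI continuous_intros)+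

section \<open>Conditional expectations and independence\<close>

lemma set_integral_space_Diff:
  fixes h :: "'a \<Rightarrow> real"
  assumes "A \<in> sets M" "integrable M h"
  shows "(\<integral>x\<in>space M - A. h x \<partial>M) = (\<integral>x\<in>space M. h x \<partial>M) - (\<integral>x\<in>A. h x \<partial>M)"
proof -
  have "A \<union> (space M - A) = space M"
    using sets.sets_into_space[OF assms(1)] by blast
  moreover have "set_integrable M B h" if "B \<in> sets M" for B
    unfolding set_integrable_def using integrable_mult_indicator[OF that assms(2)] by simp
  ultimately show ?thesis
    using set_integral_Un[of A "space M - A" M h] assms(1) by auto
qed

lemma set_integral_eq_on_sigma_sets:
  fixes f g :: "'a \<Rightarrow> real"
  assumes P: "Int_stable P" "P \<subseteq> sets M" "space M \<in> P"
    and fg: "integrable M f" "integrable M g"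
    and eq: "\<And>A. A \<in> P \<Longrightarrow> (\<integral>x\<in>A. f x \<partial>M) = (\<integral>x\<in>A. g x \<partial>M)"
    and A: "A \<in> sigma_sets (space M) P"
  shows "(\<integral>x\<in>A. f x \<partial>M) = (\<integral>x\<in>A. g x \<partial>M)"
proof -
  have sigma_P: "sigma_sets (space M) P \<subseteq> sets M"
    using P(2) by (rule sets.sigma_sets_subset)
  have "P \<subseteq> Pow (space M)"
    using P(2) sets.space_closed by blast
  from P(1) this A show ?thesis
  proof (induction rule: sigma_sets_induct_disjoint)
    case (basic A)
    then show ?case
      by (rule eq)
  next
    case empty
    then show ?case
      by (simp add: set_lebesgue_integral_def)
  next
    case (compl A)
    then have "A \<in> sets M"
      using sigma_P by blast
    then show ?case
      using compl(2) eq[OF P(3)] by (simp add: set_integral_space_Diff fg)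
  next
    case (union A)
    have "(\<integral>x\<in>(\<Union>i. A i). h x \<partial>M) = (\<Sum>i. \<integral>x\<in>A i. h x \<partial>M)"
      if "integrable M h" for h :: "'a \<Rightarrow> real"
    proof (rule lebesgue_integral_countable_add)
      show "A i \<in> sets M" for i
        using union(2) sigma_P by blast
      then show "set_integrable M (\<Union>i. A i) h"
        unfolding set_integrable_def using integrable_mult_indicator[OF _ that] by simp
    qed (use union(1) in \<open>auto simp: disjoint_family_on_def\<close>)
    then show ?case
      using union(3) fg by simp
  qed
qed

lemma (in sigma_finite_subalgebra) real_cond_exp_F_meas_nonneg:
  assumes "f \<in> borel_measurable F" and "\<And>x. 0 \<le> f x"
  shows "AE x in M. real_cond_exp M F f x = f x"
proof -
  have neg: "(\<lambda>x. ennreal (- f x)) = (\<lambda>x. 0)"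
    using assms(2) by (simp add: ennreal_neg fun_eq_iff)
  have "AE x in M. nn_cond_exp M F (\<lambda>x. ennreal (f x)) x = ennreal (f x)"
    by (rule AE_symmetric, rule nn_cond_exp_F_meas) (use assms(1) in measurable)
  moreover have "AE x in M. nn_cond_exp M F (\<lambda>x. 0) x = 0"
    using AE_symmetric[OF nn_cond_exp_F_meas[of "\<lambda>x. 0"]] by simp
  ultimately show ?thesis
    unfolding real_cond_exp_def neg by eventually_elim (simp add: assms(2))
qed

lemma (in sigma_finite_subalgebra) cond_var_cong:
  assumes "AE x in M. f x = g x" and "f \<in> borel_measurable M" "g \<in> borel_measurable M"
  shows "AE x in M. cond_var M F f x = cond_var M F g x"
proof -
  have "AE x in M. real_cond_exp M F f x = real_cond_exp M F g x"
    using assms by (rule real_cond_exp_cong)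
  with assms(1) have "AE x in M. (f x - real_cond_exp M F f x)\<^sup>2 = (g x - real_cond_exp M F g x)\<^sup>2"
    by eventually_elim simp
  then show ?thesis
    unfolding cond_var_def by (rule real_cond_exp_cong) (use assms(2,3) in measurable)
qed

lemma (in sigma_finite_subalgebra) real_cond_exp_sum_mult:
  assumes "finite I"
    and "\<And>i. i \<in> I \<Longrightarrow> a i \<in> borel_measurable F" "\<And>i. i \<in> I \<Longrightarrow> f i \<in> borel_measurable M"
    and "\<And>i. i \<in> I \<Longrightarrow> integrable M (\<lambda>x. a i x * f i x)"
  shows "AE x in M. real_cond_exp M F (\<lambda>x. \<Sum>i\<in>I. a i x * f i x) x
    = (\<Sum>i\<in>I. a i x * real_cond_exp M F (f i) x)"
  using assms
proof (induction rule: finite_induct)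
  case empty
  show ?case
    using real_cond_exp_F_meas[of "\<lambda>x. 0"] by simp
next
  case (insert j I)
  have "AE x in M. real_cond_exp M F (\<lambda>x. a j x * f j x + (\<Sum>i\<in>I. a i x * f i x)) x
      = real_cond_exp M F (\<lambda>x. a j x * f j x) x + real_cond_exp M F (\<lambda>x. \<Sum>i\<in>I. a i x * f i x) x"
    using insert.prems(3) by (intro real_cond_exp_add) auto
  moreover have "AE x in M. real_cond_exp M F (\<lambda>x. a j x * f j x) x = a j x * real_cond_exp M F (f j) x"
    using insert.prems by (intro real_cond_exp_mult) auto
  moreover have "AE x in M. real_cond_exp M F (\<lambda>x. \<Sum>i\<in>I. a i x * f i x) x
      = (\<Sum>i\<in>I. a i x * real_cond_exp M F (f i) x)"
    using insert.prems by (intro insert.IH) auto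
  ultimately show ?case
    unfolding sum.insert[OF insert.hyps] by eventually_elim simp
qed

context prob_space
begin

lemma indep_set_commute: "indep_set A B \<Longrightarrow> indep_set B A"
  unfolding indep_sets2_eq by (metis Int_commute mult.commute)

lemma indep_set_mono: "indep_set A B \<Longrightarrow> A' \<subseteq> A \<Longrightarrow> B' \<subseteq> B \<Longrightarrow> indep_set A' B'"
  unfolding indep_sets2_eq by blast

lemma sigma_finite_subalgebraI: "subalgebra M F \<Longrightarrow> sigma_finite_subalgebra M F"
  by (intro finite_measure_subalgebra_is_sigma_finite)
    (simp add: finite_measure_subalgebra_def finite_measure_subalgebra_axioms_def finite_measure_axioms)

lemma indep_set_integral_mult:
  fixes u v :: "'a \<Rightarrow> real"
  assumes indep: "indep_set (sets G) (sets H)" and space: "space G = space M" "space H = space M"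
    and u: "u \<in> borel_measurable G" "integrable M u"
    and v: "v \<in> borel_measurable H" "integrable M v"
  shows "(\<integral>x. u x * v x \<partial>M) = (\<integral>x. u x \<partial>M) * (\<integral>x. v x \<partial>M)"
proof -
  have generated: "sigma_sets (space M) {w -` A \<inter> space M | A. A \<in> sets borel} \<subseteq> sets K"
    if "space K = space M" "w \<in> borel_measurable K" for K and w :: "'a \<Rightarrow> real"
    using sets.sigma_sets_subset[of "{w -` A \<inter> space K | A. A \<in> sets borel}" K]
      measurable_sets[OF that(2)] that(1) by auto
  have "indep_var borel u borel v"
    unfolding indep_var_eq
    using u v indep_set_mono[OF indep generated[OF space(1) u(1)] generated[OF space(2) v(1)]]
    by auto
  then show ?thesis
    using u(2) v(2) by (rule indep_var_lebesgue_integral)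
qed

lemma set_integral_Int_indep:
  fixes h :: "'a \<Rightarrow> real"
  assumes indep: "indep_set (sets G) (sets H)" and space: "space G = space M" "space H = space M"
    and a: "a \<in> sets G" and b: "b \<in> sets H" and h: "h \<in> borel_measurable G" "integrable M h"
  shows "(\<integral>x\<in>a \<inter> b. h x \<partial>M) = prob b * (\<integral>x\<in>a. h x \<partial>M)"
proof -
  have "a \<in> events" "b \<in> events"
    using indep a b by (auto simp: indep_sets2_eq)
  have "(\<integral>x\<in>a \<inter> b. h x \<partial>M) = (\<integral>x. (indicator a x * h x) * indicator b x \<partial>M)"
    by (simp add: set_lebesgue_integral_def indicator_inter_arith ac_simps)
  also have "\<dots> = (\<integral>x. indicator a x * h x \<partial>M) * (\<integral>x. indicator b x \<partial>M)"
  proof (rule indep_set_integral_mult[OF indep space])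
    show "(\<lambda>x. indicator a x * h x) \<in> borel_measurable G"
      using a h(1) by measurable
    show "integrable M (\<lambda>x. indicator a x * h x)"
      using integrable_mult_indicator[OF \<open>a \<in> events\<close> h(2)] by simp
  qed (use b \<open>b \<in> events\<close> in \<open>auto simp: less_top[symmetric]\<close>)
  finally show ?thesis
    using \<open>b \<in> events\<close> by (simp add: set_lebesgue_integral_def)
qed

lemma sigma_finite_subalgebra_indep:
  assumes "indep_set (sets G) (sets H)" "space G = space M" "subalgebra G F"
  shows "sigma_finite_subalgebra M F"
proof -
  have "sets G \<subseteq> events"
    using assms(1) by (simp add: indep_sets2_eq)
  then show ?thesis
    using assms(2,3) by (intro sigma_finite_subalgebraI) (auto simp: subalgebra_def)
qed

lemma real_cond_exp_indicator_mult_indep: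
  assumes indep: "indep_set (sets G) (sets H)" and space: "space G = space M" "space H = space M"
    and F: "subalgebra G F" and h: "h \<in> borel_measurable G" "integrable M h" and B: "B \<in> sets H"
  shows "AE x in M. real_cond_exp M F (\<lambda>x. indicator B x * h x) x = prob B * real_cond_exp M F h x"
proof -
  interpret F: sigma_finite_subalgebra M F
    using indep space(1) F by (rule sigma_finite_subalgebra_indep)
  have "B \<in> events"
    using indep B by (auto simp: indep_sets2_eq)
  show ?thesis
  proof (rule F.real_cond_exp_charact)
    fix A assume A: "A \<in> sets F"
    then have "A \<in> sets G"
      using F by (auto simp: subalgebra_def)
    have "(\<integral>x\<in>A. indicator B x * h x \<partial>M) = (\<integral>x\<in>A \<inter> B. h x \<partial>M)"
      by (simp add: set_lebesgue_integral_def indicator_inter_arith ac_simps)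
    also have "\<dots> = prob B * (\<integral>x\<in>A. h x \<partial>M)"
      using indep space \<open>A \<in> sets G\<close> B h by (rule set_integral_Int_indep)
    also have "(\<integral>x\<in>A. h x \<partial>M) = (\<integral>x\<in>A. real_cond_exp M F h x \<partial>M)"
      using h(2) A by (rule F.real_cond_exp_intA)
    finally show "(\<integral>x\<in>A. indicator B x * h x \<partial>M) = (\<integral>x\<in>A. prob B * real_cond_exp M F h x \<partial>M)"
      by (simp add: set_lebesgue_integral_def mult.left_commute)
  qed (use integrable_mult_indicator[OF \<open>B \<in> events\<close> h(2)] h(2) in \<open>auto intro: F.real_cond_exp_int\<close>)
qed

lemma set_integral_real_cond_exp_Int_indep:
  assumes indep: "indep_set (sets G) (sets H)" and space: "space G = space M" "space H = space M"
    and F: "subalgebra G F" and f: "f \<in> borel_measurable G" "integrable M f"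
    and a: "a \<in> sets F" and b: "b \<in> sets H"
  shows "(\<integral>x\<in>a \<inter> b. f x \<partial>M) = (\<integral>x\<in>a \<inter> b. real_cond_exp M F f x \<partial>M)"
proof -
  interpret F: sigma_finite_subalgebra M F
    using indep space(1) F by (rule sigma_finite_subalgebra_indep)
  have "a \<in> sets G"
    using F a by (auto simp: subalgebra_def)
  have "real_cond_exp M F f \<in> borel_measurable G"
    using F by (rule measurable_from_subalg) simp
  note Int_indep = set_integral_Int_indep[OF indep space \<open>a \<in> sets G\<close> b]
  have "(\<integral>x\<in>a \<inter> b. f x \<partial>M) = prob b * (\<integral>x\<in>a. f x \<partial>M)"
    using f by (rule Int_indep)
  also have "\<dots> = prob b * (\<integral>x\<in>a. real_cond_exp M F f x \<partial>M)"
    using F.real_cond_exp_intA[OF f(2) a] by simp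
  also have "\<dots> = (\<integral>x\<in>a \<inter> b. real_cond_exp M F f x \<partial>M)"
    using \<open>real_cond_exp M F f \<in> borel_measurable G\<close> F.real_cond_exp_int(1)[OF f(2)]
    by (rule Int_indep[symmetric])
  finally show ?thesis .
qed

lemma real_cond_exp_indep_sigma_Un:
  assumes indep: "indep_set (sets G) (sets H)" and space: "space G = space M" "space H = space M"
    and F: "subalgebra G F" and f: "f \<in> borel_measurable G" "integrable M f"
  shows "AE x in M. real_cond_exp M (sigma (space M) (sets F \<union> sets H)) f x = real_cond_exp M F f x"
proof -
  define FH where "FH = sigma (space M) (sets F \<union> sets H)"
  define P where "P = {a \<inter> b | a b. a \<in> sets F \<and> b \<in> sets H}"
  interpret F: sigma_finite_subalgebra M F
    using indep space(1) F by (rule sigma_finite_subalgebra_indep)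
  have gen: "sets F \<union> sets H \<subseteq> events" and "space F = space M"
    using F.subalg indep by (auto simp: subalgebra_def indep_sets2_eq)
  then have "sets F \<union> sets H \<subseteq> Pow (space M)"
    using sets.space_closed[of M] by blast
  then have sets_FH: "sets FH = sigma_sets (space M) P"
    unfolding FH_def P_def
    by (simp add: sets_measure_of sigma_sets_Un_eq_Int[OF \<open>space F = space M\<close> space(2)])
  have FH: "subalgebra M FH" "subalgebra FH F"
    using subalgebra_sigma[OF gen] \<open>sets F \<union> sets H \<subseteq> Pow (space M)\<close> \<open>space F = space M\<close>
    by (auto simp: subalgebra_def FH_def sets_measure_of intro: sigma_sets.Basic)
  interpret FH: sigma_finite_subalgebra M FH
    by (rule sigma_finite_subalgebraI) fact
  have P: "Int_stable P" "P \<subseteq> events" "space M \<in> P"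
  proof -
    show "Int_stable P"
      unfolding P_def by (rule Int_stable_Int_sets)
    show "P \<subseteq> events"
      using FH(1) sigma_sets_superset_generator[of P "space M"] by (auto simp: subalgebra_def sets_FH)
    show "space M \<in> P"
      using sets.top[of F] sets.top[of H] \<open>space F = space M\<close> space(2) unfolding P_def by blast
  qed
  have on_P: "(\<integral>x\<in>p. f x \<partial>M) = (\<integral>x\<in>p. real_cond_exp M F f x \<partial>M)" if "p \<in> P" for p
    using that set_integral_real_cond_exp_Int_indep[OF indep space F f] unfolding P_def by blast
  show ?thesis
    unfolding FH_def[symmetric]
  proof (rule FH.real_cond_exp_charact)
    fix A assume "A \<in> sets FH"
    then have "A \<in> sigma_sets (space M) P"
      by (simp add: sets_FH)
    then show "(\<integral>x\<in>A. f x \<partial>M) = (\<integral>x\<in>A. real_cond_exp M F f x \<partial>M)"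
      using set_integral_eq_on_sigma_sets[OF P f(2) F.real_cond_exp_int(1)[OF f(2)] on_P] by blast
  next
    show "real_cond_exp M F f \<in> borel_measurable FH"
      using FH(2) by (rule measurable_from_subalg) simp
  qed (simp_all add: f(2) F.real_cond_exp_int(1)[OF f(2)])
qed

end

lemma sets_vimage_algebra_restrict:
  assumes V: "\<And>k. k \<in> K \<Longrightarrow> V k \<in> measurable M (Ms k)" and j: "j \<in> K"
  shows "sets (vimage_algebra (space M) (V j) (Ms j))
    \<subseteq> sets (vimage_algebra (space M) (\<lambda>\<omega>. restrict (\<lambda>k. V k \<omega>) K) (PiM K Ms))"
proof -
  let ?R = "\<lambda>\<omega>. restrict (\<lambda>k. V k \<omega>) K"
  have "V k \<omega> \<in> space (Ms k)" if "\<omega> \<in> space M" "k \<in> K" for \<omega> k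
    using measurable_space[OF V] that by blast
  then have "?R \<in> measurable (vimage_algebra (space M) ?R (PiM K Ms)) (PiM K Ms)"
    by (intro measurable_vimage_algebra1) (auto simp: space_PiM)
  then have "(\<lambda>\<omega>. ?R \<omega> j) \<in> measurable (vimage_algebra (space M) ?R (PiM K Ms)) (Ms j)"
    using j by measurable
  then show ?thesis
    using j by (intro sets_image_in_sets) simp_all
qed

lemma (in prob_space) real_cond_exp_sigma_gen_indep_vars:
  assumes indep: "indep_vars Ms V I" and i: "i \<in> I"
    and X: "\<And>j. j \<in> I \<Longrightarrow> X j \<in> measurable (vimage_algebra (space M) (V j) (Ms j)) N"
    and f: "f \<in> borel_measurable (vimage_algebra (space M) (V i) (Ms i))" "integrable M f"
  shows "AE x in M. real_cond_exp M (sigma_gen M X N I) f x = real_cond_exp M (sigma_gen M X N {i}) f x"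
proof -
  define G where "G K = vimage_algebra (space M) (\<lambda>\<omega>. restrict (\<lambda>j. V j \<omega>) K) (PiM K Ms)" for K
  have V: "V j \<in> measurable M (Ms j)" if "j \<in> I" for j
    using indep that by (simp add: indep_vars_def)
  have unit_sub: "subalgebra (G K) (vimage_algebra (space M) (V j) (Ms j))" if "K \<subseteq> I" "j \<in> K" for K j
    using sets_vimage_algebra_restrict[where K=K and V=V and Ms=Ms and j=j] V that
    by (auto simp: subalgebra_def G_def)
  have sigma_gen_sub: "subalgebra (G K) (sigma_gen M X N K)" if "K \<subseteq> I" for K
    using sets_sigma_gen_subset[of "G K" M K X N] measurable_from_subalg[OF unit_sub X] that
    by (auto simp: subalgebra_def G_def)
  have "indep_var (PiM {i} Ms) (\<lambda>\<omega>. restrict (\<lambda>j. V j \<omega>) {i})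
      (PiM (I - {i}) Ms) (\<lambda>\<omega>. restrict (\<lambda>j. V j \<omega>) (I - {i}))"
    using i by (intro indep_var_restrict[OF indep]) auto
  then have "indep_set (sets (G {i})) (sets (G (I - {i})))"
    unfolding indep_var_eq G_def sets_vimage_algebra by simp
  then have "indep_set (sets (G {i})) (sets (sigma_gen M X N (I - {i})))"
    by (rule indep_set_mono[OF _ subset_refl]) (use sigma_gen_sub[of "I - {i}"] in \<open>simp add: subalgebra_def\<close>)
  then have "AE x in M. real_cond_exp M (sigma (space M) (sets (sigma_gen M X N {i}) \<union>
      sets (sigma_gen M X N (I - {i})))) f x = real_cond_exp M (sigma_gen M X N {i}) f x"
    using sigma_gen_sub[of "{i}"] measurable_from_subalg[OF unit_sub[of "{i}" i] f(1)] f(2) i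
    by (intro real_cond_exp_indep_sigma_Un) (simp_all add: G_def)
  moreover have "sigma_gen M X N I
      = sigma (space M) (sets (sigma_gen M X N {i}) \<union> sets (sigma_gen M X N (I - {i})))"
    using sigma_gen_Un[of M X N "{i}" "I - {i}"] i by (simp add: insert_absorb)
  ultimately show ?thesis
    by simp
qed

section \<open>A design switching on an independent event\<close>

lemma square_indicator_switch_deviation:
  fixes a b :: real
  assumes "x \<in> \<Omega>"
  shows "(indicator Z x * a + indicator (\<Omega> - Z) x * b - (a + b) / 2)\<^sup>2 = ((a - b) / 2)\<^sup>2"
  using assms by (cases "x \<in> Z") (simp_all add: power2_eq_square field_simps)

text \<open>In the application, G is generated by the units, F by the covariates, and Z is the event
  Z* = 1, which is independent of G.\<close>

locale indep_switch = prob_space +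
  fixes F G H :: "'a measure" and Z :: "'a set"
  assumes indep: "indep_set (sets G) (sets H)"
    and space_G: "space G = space M" and space_H: "space H = space M"
    and subalgebra_F: "subalgebra G F" and Z: "Z \<in> sets H"
begin

lemma sets_G: "sets G \<subseteq> events" and sets_H: "sets H \<subseteq> events"
  using indep by (simp_all add: indep_sets2_eq)

lemma compl_Z: "space M - Z \<in> sets H"
  using sets.compl_sets[OF Z] space_H by simp

sublocale F: sigma_finite_subalgebra M F
  using subalgebra_F sets_G space_G by (intro sigma_finite_subalgebraI) (auto simp: subalgebra_def)

lemma measurable_F_G: "h \<in> borel_measurable F \<Longrightarrow> h \<in> borel_measurable G"
  using subalgebra_F by (rule measurable_from_subalg)

lemma subalgebra_sigma_F_H:
  "subalgebra M (sigma (space M) (sets F \<union> sets H))" "sets H \<subseteq> sets (sigma (space M) (sets F \<union> sets H))"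
proof -
  have gen: "sets F \<union> sets H \<subseteq> events"
    using subalgebra_F sets_G sets_H by (auto simp: subalgebra_def)
  then show "subalgebra M (sigma (space M) (sets F \<union> sets H))"
    by (rule subalgebra_sigma)
  have "sets F \<union> sets H \<subseteq> Pow (space M)"
    using gen sets.space_closed[of M] by (rule subset_trans)
  then show "sets H \<subseteq> sets (sigma (space M) (sets F \<union> sets H))"
    by (simp add: sets_measure_of sigma_sets.Basic subsetI)
qed

lemma real_cond_exp_indicator_sigma_F_H:
  assumes B: "B \<in> sets H" and T: "T \<in> borel_measurable G" "integrable M T"
  shows "AE x in M. real_cond_exp M (sigma (space M) (sets F \<union> sets H)) (\<lambda>x. indicator B x * T x) x
    = indicator B x * real_cond_exp M F T x"
proof -
  interpret FH: sigma_finite_subalgebra M "sigma (space M) (sets F \<union> sets H)"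
    using subalgebra_sigma_F_H(1) by (rule sigma_finite_subalgebraI)
  have "B \<in> events"
    using B sets_H by auto
  have "AE x in M. real_cond_exp M (sigma (space M) (sets F \<union> sets H)) (\<lambda>x. indicator B x * T x) x
      = indicator B x * real_cond_exp M (sigma (space M) (sets F \<union> sets H)) T x"
    using B subalgebra_sigma_F_H(2) T measurable_from_subalg[OF subalgebra_sigma_F_H(1)]
      integrable_mult_indicator[OF \<open>B \<in> events\<close> T(2)]
    by (intro FH.real_cond_exp_mult) auto
  moreover have "AE x in M. real_cond_exp M (sigma (space M) (sets F \<union> sets H)) T x = real_cond_exp M F T x"
    using indep space_G space_H subalgebra_F T by (rule real_cond_exp_indep_sigma_Un)
  ultimately show ?thesis
    by eventually_elim simp
qed

lemma real_cond_exp_switch: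
  assumes T1: "T1 \<in> borel_measurable G" "integrable M T1"
    and T0: "T0 \<in> borel_measurable G" "integrable M T0"
    and W: "\<And>x. x \<in> space M \<Longrightarrow> W x = indicator Z x * T1 x + indicator (space M - Z) x * T0 x"
  shows "AE x in M. real_cond_exp M (sigma (space M) (sets F \<union> sets H)) W x
    = indicator Z x * real_cond_exp M F T1 x + indicator (space M - Z) x * real_cond_exp M F T0 x"
proof -
  interpret FH: sigma_finite_subalgebra M "sigma (space M) (sets F \<union> sets H)"
    using subalgebra_sigma_F_H(1) by (rule sigma_finite_subalgebraI)
  have int: "integrable M (\<lambda>x. indicator Z x * T1 x)" "integrable M (\<lambda>x. indicator (space M - Z) x * T0 x)"
    using integrable_mult_indicator[OF _ T1(2), of Z] integrable_mult_indicator[OF _ T0(2), of "space M - Z"]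
      Z compl_Z sets_H by auto
  have "AE x in M. real_cond_exp M (sigma (space M) (sets F \<union> sets H)) W x
      = real_cond_exp M (sigma (space M) (sets F \<union> sets H))
          (\<lambda>x. indicator Z x * T1 x + indicator (space M - Z) x * T0 x) x"
    using W int by (intro FH.real_cond_exp_cong AE_I2) (auto simp: measurable_cong[OF W])
  moreover have "AE x in M. real_cond_exp M (sigma (space M) (sets F \<union> sets H))
        (\<lambda>x. indicator Z x * T1 x + indicator (space M - Z) x * T0 x) x
      = real_cond_exp M (sigma (space M) (sets F \<union> sets H)) (\<lambda>x. indicator Z x * T1 x) x
        + real_cond_exp M (sigma (space M) (sets F \<union> sets H)) (\<lambda>x. indicator (space M - Z) x * T0 x) x"
    using int by (rule FH.real_cond_exp_add)
  moreover note real_cond_exp_indicator_sigma_F_H[OF Z T1] real_cond_exp_indicator_sigma_F_H[OF compl_Z T0]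
  ultimately show ?thesis
    by eventually_elim simp
qed

lemma cond_exp_on_event_switch:
  assumes B: "B \<in> sets H" "prob B \<noteq> 0"
    and T: "T \<in> borel_measurable G" "integrable M T" and W: "\<And>x. x \<in> B \<Longrightarrow> W x = T x"
  shows "AE x in M. cond_exp_on_event M F B W x = real_cond_exp M F T x"
proof -
  have BW: "(\<lambda>x. indicator B x * W x) = (\<lambda>x. indicator B x * T x)"
    using W by (simp add: indicator_def fun_eq_iff)
  have "AE x in M. real_cond_exp M F (\<lambda>x. indicator B x * T x) x = prob B * real_cond_exp M F T x"
    using indep space_G space_H subalgebra_F T B(1) by (rule real_cond_exp_indicator_mult_indep)
  moreover have "AE x in M. real_cond_exp M F (\<lambda>x. indicator B x * 1) x = prob B * real_cond_exp M F (\<lambda>x. 1) x"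
    using indep space_G space_H subalgebra_F _ _ B(1) by (rule real_cond_exp_indicator_mult_indep) auto
  moreover have "AE x in M. real_cond_exp M F (\<lambda>x. 1) x = 1"
    by (rule F.real_cond_exp_F_meas) auto
  ultimately have "AE x in M. real_cond_exp M F (\<lambda>x. indicator B x * T x) x / real_cond_exp M F (\<lambda>x. indicator B x * 1) x
      = real_cond_exp M F T x"
    by eventually_elim (use B(2) in simp)
  then show ?thesis
    unfolding cond_exp_on_event_def BW by simp
qed

lemma real_cond_exp_switch_F:
  assumes a: "a \<in> borel_measurable G" "integrable M a" and b: "b \<in> borel_measurable G" "integrable M b"
  shows "AE x in M. real_cond_exp M F (\<lambda>x. indicator Z x * a x + indicator (space M - Z) x * b x) x
    = prob Z * real_cond_exp M F a x + prob (space M - Z) * real_cond_exp M F b x"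
proof -
  have "Z \<in> events" "space M - Z \<in> events"
    using Z compl_Z sets_H by auto
  then have "AE x in M. real_cond_exp M F (\<lambda>x. indicator Z x * a x + indicator (space M - Z) x * b x) x
      = real_cond_exp M F (\<lambda>x. indicator Z x * a x) x + real_cond_exp M F (\<lambda>x. indicator (space M - Z) x * b x) x"
    using integrable_mult_indicator[OF _ a(2)] integrable_mult_indicator[OF _ b(2)]
    by (intro F.real_cond_exp_add) simp_all
  moreover have "AE x in M. real_cond_exp M F (\<lambda>x. indicator Z x * a x) x = prob Z * real_cond_exp M F a x"
    using indep space_G space_H subalgebra_F a Z by (rule real_cond_exp_indicator_mult_indep)
  moreover have "AE x in M. real_cond_exp M F (\<lambda>x. indicator (space M - Z) x * b x) x
      = prob (space M - Z) * real_cond_exp M F b x"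
    using indep space_G space_H subalgebra_F b compl_Z by (rule real_cond_exp_indicator_mult_indep)
  ultimately show ?thesis
    by eventually_elim simp
qed

lemma cond_var_switch:
  assumes prob_Z: "prob Z = 1 / 2"
    and a: "a \<in> borel_measurable F" "integrable M a" and b: "b \<in> borel_measurable F" "integrable M b"
  shows "AE x in M. cond_var M F (\<lambda>x. indicator Z x * a x + indicator (space M - Z) x * b x) x
    = ((a x - b x) / 2)\<^sup>2"
proof -
  define W where "W x = indicator Z x * a x + indicator (space M - Z) x * b x" for x
  have prob_compl_Z: "prob (space M - Z) = 1 / 2"
    using Z sets_H prob_compl[of Z] prob_Z by auto
  from real_cond_exp_switch_F[OF measurable_F_G[OF a(1)] a(2) measurable_F_G[OF b(1)] b(2)]
    F.real_cond_exp_F_meas[OF a(2,1)] F.real_cond_exp_F_meas[OF b(2,1)] AE_space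
  have "AE x in M. (W x - real_cond_exp M F W x)\<^sup>2 = ((a x - b x) / 2)\<^sup>2"
    unfolding W_def[abs_def]
  proof eventually_elim
    case (elim x)
    then have "real_cond_exp M F (\<lambda>x. indicator Z x * a x + indicator (space M - Z) x * b x) x
        = (a x + b x) / 2"
      using prob_Z prob_compl_Z by simp
    then show ?case
      by (simp only: square_indicator_switch_deviation[OF elim(4)])
  qed
  then have "AE x in M. cond_var M F W x = real_cond_exp M F (\<lambda>x. ((a x - b x) / 2)\<^sup>2) x"
    unfolding cond_var_def by (rule F.real_cond_exp_cong) (use a b Z sets_H in \<open>auto simp: W_def\<close>)
  moreover have "AE x in M. real_cond_exp M F (\<lambda>x. ((a x - b x) / 2)\<^sup>2) x = ((a x - b x) / 2)\<^sup>2"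
    using a(1) b(1) by (intro F.real_cond_exp_F_meas_nonneg) auto
  ultimately show ?thesis
    unfolding W_def by eventually_elim simp
qed

end

lemma balanced_sums:
  fixes a b :: "'i \<Rightarrow> real"
  assumes "finite I" "S \<subseteq> I" and balanced: "(\<Sum>i\<in>S. a i + b i) = (\<Sum>i\<in>I - S. a i + b i)"
  shows "(\<Sum>i\<in>S. a i) - (\<Sum>i\<in>I - S. b i) = (\<Sum>i\<in>I - S. a i) - (\<Sum>i\<in>S. b i)"
    and "2 * ((\<Sum>i\<in>S. a i) - (\<Sum>i\<in>I - S. b i)) = (\<Sum>i\<in>I. a i - b i)"
proof -
  have split: "sum h I = sum h S + sum h (I - S)" for h :: "'i \<Rightarrow> real"
    using sum.subset_diff[OF assms(2,1), of h] by linarith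
  show "(\<Sum>i\<in>S. a i) - (\<Sum>i\<in>I - S. b i) = (\<Sum>i\<in>I - S. a i) - (\<Sum>i\<in>S. b i)"
    using balanced by (simp add: sum.distrib)
  show "2 * ((\<Sum>i\<in>S. a i) - (\<Sum>i\<in>I - S. b i)) = (\<Sum>i\<in>I. a i - b i)"
    using balanced split[of a] split[of b] by (simp add: sum.distrib sum_subtractf)
qed

section \<open>The paired design\<close>

locale paired_design = prob_space M
  for M :: "'a measure" and n :: nat
    and Y1 Y0 :: "nat \<Rightarrow> 'a \<Rightarrow> real" and X :: "nat \<Rightarrow> 'a \<Rightarrow> real ^ 'd"
    and Zs :: "'a \<Rightarrow> bool" and S :: "'a \<Rightarrow> nat set" +
  assumes n_pos: "n \<ge> 1"
    and indep_units: "indep_vars (\<lambda>_. borel) (\<lambda>i \<omega>. (Y1 i \<omega>, Y0 i \<omega>, X i \<omega>)) {1..n}"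
    and integrable_outcomes: "\<forall>i\<in>{1..n}. integrable M (Y1 i) \<and> integrable M (Y0 i)"
    and indep_Zs: "indep_set (sets (vimage_algebra (space M) Zs (count_space UNIV)))
      (sets (vimage_algebra (space M) (\<lambda>\<omega>. \<lambda>i\<in>{1..n}. (Y1 i \<omega>, Y0 i \<omega>, X i \<omega>)) (PiM {1..n} (\<lambda>_. borel))))"
    and prob_Zs: "prob {\<omega> \<in> space M. Zs \<omega>} = 1 / 2"
    and S_measurable: "\<forall>i\<in>{1..n}. {\<omega> \<in> space M. i \<in> S \<omega>} \<in> sets (sigma_gen M X borel {1..n})"
    and S_subset: "\<And>\<omega>. \<omega> \<in> space M \<Longrightarrow> S \<omega> \<subseteq> {1..n}"
begin

abbreviation sigma_units :: "'a measure" where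
  "sigma_units \<equiv> vimage_algebra (space M) (\<lambda>\<omega>. \<lambda>i\<in>{1..n}. (Y1 i \<omega>, Y0 i \<omega>, X i \<omega>)) (PiM {1..n} (\<lambda>_. borel))"

abbreviation sigma_X :: "'a measure" where
  "sigma_X \<equiv> sigma_gen M X borel {1..n}"

abbreviation sigma_XZ :: "'a measure" where
  "sigma_XZ \<equiv> sigma (space M) (gen_sets M X borel {1..n} \<union> gen_sets M (design_Z Zs S) borel {1..n})"

abbreviation tau_hat_design :: "'a \<Rightarrow> real" where
  "tau_hat_design \<equiv> tau_hat n (obs_Y Y1 Y0 (design_Z Zs S)) (design_Z Zs S)"

definition Zstar :: "'a set" where
  "Zstar = {\<omega> \<in> space M. Zs \<omega>}"

abbreviation sigma_Zstar :: "'a measure" where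
  "sigma_Zstar \<equiv> sigma (space M) {Zstar}"

definition in_S :: "nat \<Rightarrow> 'a set" where
  "in_S i = {\<omega> \<in> space M. i \<in> S \<omega>}"

text \<open>The values of the estimator on the event Z* = 1, where exactly the units in S are treated,
  and on its complement.\<close>

definition tau_hat_S :: "'a \<Rightarrow> real" where
  "tau_hat_S \<omega> = 2 / real n * ((\<Sum>i=1..n. indicator (in_S i) \<omega> * Y1 i \<omega>)
     - (\<Sum>i=1..n. indicator (space M - in_S i) \<omega> * Y0 i \<omega>))"

definition tau_hat_Sc :: "'a \<Rightarrow> real" where
  "tau_hat_Sc \<omega> = 2 / real n * ((\<Sum>i=1..n. indicator (space M - in_S i) \<omega> * Y1 i \<omega>)
     - (\<Sum>i=1..n. indicator (in_S i) \<omega> * Y0 i \<omega>))"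

lemma measurable_unit:
  assumes "i \<in> {1..n}"
  shows "Y1 i \<in> borel_measurable sigma_units" "Y0 i \<in> borel_measurable sigma_units"
    and "X i \<in> borel_measurable sigma_units"
proof -
  have "(\<lambda>\<omega>. \<lambda>i\<in>{1..n}. (Y1 i \<omega>, Y0 i \<omega>, X i \<omega>)) \<in> measurable sigma_units (PiM {1..n} (\<lambda>_. borel))"
    by (rule measurable_vimage_algebra1) (simp add: space_PiM)
  from measurable_compose[OF this measurable_component_singleton[OF assms]]
  have "(\<lambda>\<omega>. (Y1 i \<omega>, Y0 i \<omega>, X i \<omega>)) \<in> measurable sigma_units borel"
    using assms by simp
  from measurable_triple_components[OF this] show
    "Y1 i \<in> borel_measurable sigma_units" "Y0 i \<in> borel_measurable sigma_units"
    "X i \<in> borel_measurable sigma_units"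
    by simp_all
qed

lemma subalgebra_sigma_X: "subalgebra sigma_units sigma_X"
  using sets_sigma_gen_subset[of sigma_units M "{1..n}" X borel] measurable_unit(3)
  by (simp add: subalgebra_def)

lemma in_S_sigma_X: "i \<in> {1..n} \<Longrightarrow> in_S i \<in> sets sigma_X"
  using S_measurable by (simp add: in_S_def)

lemma measurable_indicator_in_S:
  assumes "i \<in> {1..n}"
  shows "indicator (in_S i) \<in> borel_measurable sigma_X"
    and "indicator (space M - in_S i) \<in> borel_measurable sigma_X"
  using in_S_sigma_X[OF assms] sets.compl_sets[of "in_S i" sigma_X] by simp_all

lemma sets_sigma_Zstar: "sets sigma_Zstar = sigma_sets (space M) {Zstar}"
  by (rule sets_measure_of) (auto simp: Zstar_def)

lemma indep_units_Zstar: "indep_set (sets sigma_units) (sets sigma_Zstar)"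
proof -
  have "Zs -` {True} \<inter> space M = Zstar"
    by (auto simp: Zstar_def)
  then have "Zstar \<in> sets (vimage_algebra (space M) Zs (count_space UNIV))"
    using in_vimage_algebra[of "{True}" "count_space UNIV" Zs "space M"] by simp
  then have "sigma_sets (space M) {Zstar} \<subseteq> sets (vimage_algebra (space M) Zs (count_space UNIV))"
    using sets.sigma_sets_subset[of "{Zstar}" "vimage_algebra (space M) Zs (count_space UNIV)"] by simp
  then have "sets sigma_Zstar \<subseteq> sets (vimage_algebra (space M) Zs (count_space UNIV))"
    by (simp only: sets_sigma_Zstar)
  then show ?thesis
    by (rule indep_set_commute[OF indep_set_mono[OF indep_Zs _ subset_refl]])
qed

lemma space_sigma_Zstar: "space sigma_Zstar = space M"
  by (simp add: space_measure_of_conv)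

lemma Zstar_in_sigma_Zstar: "Zstar \<in> sets sigma_Zstar"
  unfolding sets_sigma_Zstar by (rule sigma_sets.Basic) simp

sublocale switch: indep_switch M sigma_X sigma_units sigma_Zstar Zstar
  by unfold_locales (simp_all only: indep_units_Zstar space_vimage_algebra space_sigma_Zstar
      subalgebra_sigma_X Zstar_in_sigma_Zstar)

lemma prob_Zstar: "prob Zstar = 1 / 2"
  using prob_Zs by (simp add: Zstar_def)

lemma events_sigma_X: "sets sigma_X \<subseteq> events"
  using subalgebra_sigma_X switch.sets_G by (auto simp: subalgebra_def)

lemma
  assumes "i \<in> {1..n}" "A \<in> {in_S i, space M - in_S i}" "Y \<in> {Y1, Y0}"
  shows measurable_indicator_outcome: "(\<lambda>\<omega>. indicator A \<omega> * Y i \<omega>) \<in> borel_measurable sigma_units"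
    and integrable_indicator_outcome: "integrable M (\<lambda>\<omega>. indicator A \<omega> * Y i \<omega>)"
proof -
  have "A \<in> sets sigma_X"
    using assms(2) in_S_sigma_X[OF assms(1)] sets.compl_sets[of "in_S i" sigma_X] by auto
  then have "A \<in> sets sigma_units" "A \<in> events"
    using subalgebra_sigma_X events_sigma_X by (auto simp: subalgebra_def)
  moreover have "Y i \<in> borel_measurable sigma_units" "integrable M (Y i)"
    using assms(3) measurable_unit[OF assms(1)] integrable_outcomes assms(1) by auto
  ultimately show "(\<lambda>\<omega>. indicator A \<omega> * Y i \<omega>) \<in> borel_measurable sigma_units"
    "integrable M (\<lambda>\<omega>. indicator A \<omega> * Y i \<omega>)"
    using integrable_mult_indicator[of A M "Y i"] by simp_all
qed

lemma measurable_tau_hat_S_Sc: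
  "tau_hat_S \<in> borel_measurable sigma_units" "tau_hat_Sc \<in> borel_measurable sigma_units"
  unfolding tau_hat_S_def[abs_def] tau_hat_Sc_def[abs_def]
  by (intro borel_measurable_times borel_measurable_const borel_measurable_diff
      borel_measurable_sum measurable_indicator_outcome; simp)+

lemma integrable_tau_hat_S_Sc: "integrable M tau_hat_S" "integrable M tau_hat_Sc"
  unfolding tau_hat_S_def[abs_def] tau_hat_Sc_def[abs_def]
  by (intro integrable_mult_right Bochner_Integration.integrable_diff
      Bochner_Integration.integrable_sum integrable_indicator_outcome; simp)+

lemma tau_hat_switch:
  assumes "\<omega> \<in> space M"
  shows "tau_hat_design \<omega>
    = indicator Zstar \<omega> * tau_hat_S \<omega> + indicator (space M - Zstar) \<omega> * tau_hat_Sc \<omega>"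
proof -
  have summand: "obs_Y Y1 Y0 (design_Z Zs S) i \<omega> * design_Z Zs S i \<omega>
      - obs_Y Y1 Y0 (design_Z Zs S) i \<omega> * (1 - design_Z Zs S i \<omega>)
    = (if Zs \<omega> then indicator (in_S i) \<omega> * Y1 i \<omega> - indicator (space M - in_S i) \<omega> * Y0 i \<omega>
       else indicator (space M - in_S i) \<omega> * Y1 i \<omega> - indicator (in_S i) \<omega> * Y0 i \<omega>)" for i
    using assms by (auto simp: obs_Y_def design_Z_def in_S_def)
  show ?thesis
    unfolding tau_hat_def summand using assms
    by (cases "Zs \<omega>") (simp_all add: Zstar_def tau_hat_S_def tau_hat_Sc_def sum_subtractf)
qed

lemma design_Z_eq:
  "\<omega> \<in> space M \<Longrightarrow> design_Z Zs S i \<omega>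
    = indicator Zstar \<omega> * indicator (in_S i) \<omega> + indicator (space M - Zstar) \<omega> * indicator (space M - in_S i) \<omega>"
  by (simp add: design_Z_def Zstar_def in_S_def indicator_def)

lemma Zstar_eq_design_Z:
  "Zstar = {\<omega> \<in> space M. design_Z Zs S 1 \<omega> = indicator (in_S 1) \<omega>}"
  by (auto simp: design_Z_def Zstar_def in_S_def)

lemma measurable_design_Z:
  assumes "i \<in> {1..n}"
  shows "design_Z Zs S i \<in> borel_measurable (sigma (space M) (sets sigma_X \<union> sets sigma_Zstar))"
proof -
  define XZ where "XZ = sigma (space M) (sets sigma_X \<union> sets sigma_Zstar)"
  have "sets sigma_X \<subseteq> sets XZ"
    using sets.space_closed[of sigma_X] sets.space_closed[of sigma_Zstar]
    by (auto simp: XZ_def sets_measure_of space_sigma_Zstar intro: sigma_sets.Basic)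
  then have "in_S i \<in> sets XZ"
    using in_S_sigma_X[OF assms] by blast
  moreover have "Zstar \<in> sets XZ"
    using switch.subalgebra_sigma_F_H(2) Zstar_in_sigma_Zstar unfolding XZ_def by blast
  moreover have "space XZ = space M"
    by (simp add: XZ_def space_measure_of_conv)
  ultimately show ?thesis
    unfolding XZ_def[symmetric] using sets.compl_sets[of _ XZ]
    by (subst measurable_cong[OF design_Z_eq]) (simp_all, measurable)
qed

lemma Zstar_in_sigma_XZ: "Zstar \<in> sets sigma_XZ"
proof -
  define XD where "XD = gen_sets M X borel {1..n} \<union> gen_sets M (design_Z Zs S) borel {1..n}"
  define XZ where "XZ = sigma (space M) XD"
  have XD_Pow: "XD \<subseteq> Pow (space M)"
    unfolding XD_def by (simp add: gen_sets_Pow)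
  have [measurable]: "design_Z Zs S 1 \<in> borel_measurable XZ"
    unfolding XZ_def using n_pos by (intro measurable_sigma_gen_sets[OF _ XD_Pow]) (auto simp: XD_def)
  have "sets sigma_X \<subseteq> sets XZ"
    unfolding sets_sigma_gen XZ_def sets_measure_of[OF XD_Pow] by (rule sigma_sets_subseteq) (simp add: XD_def)
  then have [measurable]: "in_S 1 \<in> sets XZ"
    using in_S_sigma_X n_pos by auto
  have "{\<omega> \<in> space XZ. design_Z Zs S 1 \<omega> = indicator (in_S 1) \<omega>} \<in> sets XZ"
    by measurable
  moreover have "space XZ = space M"
    by (simp add: XZ_def space_measure_of_conv)
  ultimately show ?thesis
    unfolding Zstar_eq_design_Z XD_def[symmetric] XZ_def[symmetric] by simp
qed

lemma sigma_design: "sigma_XZ = sigma (space M) (sets sigma_X \<union> sets sigma_Zstar)"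
proof -
  define XD where "XD = gen_sets M X borel {1..n} \<union> gen_sets M (design_Z Zs S) borel {1..n}"
  define XZ where "XZ = sigma (space M) (sets sigma_X \<union> sets sigma_Zstar)"
  have XD_Pow: "XD \<subseteq> Pow (space M)"
    unfolding XD_def by (simp add: gen_sets_Pow)
  have XZ_Pow: "sets sigma_X \<union> sets sigma_Zstar \<subseteq> Pow (space M)"
    using sets.space_closed[of sigma_X] sets.space_closed[of sigma_Zstar] space_sigma_Zstar by simp
  then have sets_XZ: "sets XZ = sigma_sets (space M) (sets sigma_X \<union> sets sigma_Zstar)"
    and "space XZ = space M"
    unfolding XZ_def by (simp_all add: sets_measure_of space_measure_of_conv)
  have "gen_sets M X borel {1..n} \<subseteq> sets XZ"
    using sets_sigma_gen[of M X borel "{1..n}"] sigma_sets_superset_generator[of _ "space M"]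
    unfolding sets_XZ by (blast intro: sigma_sets.Basic)
  moreover have "gen_sets M (design_Z Zs S) borel {1..n} \<subseteq> sets XZ"
    using measurable_design_Z by (intro gen_sets_subset_sets[OF \<open>space XZ = space M\<close>]) (simp add: XZ_def)
  ultimately have sub: "sigma_sets (space M) XD \<subseteq> sigma_sets (space M) (sets sigma_X \<union> sets sigma_Zstar)"
    using sets.sigma_sets_subset[of XD XZ] unfolding XD_def \<open>space XZ = space M\<close> sets_XZ by blast
  have "sets sigma_X \<union> sets sigma_Zstar \<subseteq> sigma_sets (space M) XD"
  proof -
    have "sets sigma_X \<subseteq> sigma_sets (space M) XD"
      unfolding sets_sigma_gen XD_def by (rule sigma_sets_subseteq) simp
    moreover have "sets sigma_Zstar \<subseteq> sigma_sets (space M) XD"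
      using Zstar_in_sigma_XZ XD_Pow unfolding sets_sigma_Zstar XD_def
      by (simp add: sets_measure_of sigma_sets_mono)
    ultimately show ?thesis
      by blast
  qed
  then have "sigma_sets (space M) XD = sigma_sets (space M) (sets sigma_X \<union> sets sigma_Zstar)"
    by (rule antisym[OF sub sigma_sets_mono])
  then show ?thesis
    using XD_Pow XZ_Pow unfolding XD_def by (rule sigma_eqI[rotated 2])
qed

lemma assignment_event_S:
  "{\<omega> \<in> space M. \<forall>i\<in>{1..n}. design_Z Zs S i \<omega> = of_bool (i \<in> S \<omega>)} = Zstar"
  using n_pos by (auto simp: Zstar_def design_Z_def dest!: bspec[where x=1])

lemma assignment_event_Sc:
  "{\<omega> \<in> space M. \<forall>i\<in>{1..n}. design_Z Zs S i \<omega> = 1 - of_bool (i \<in> S \<omega>)} = space M - Zstar"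
  using n_pos by (auto simp: Zstar_def design_Z_def dest!: bspec[where x=1])

lemma sum_indicator_in_S:
  fixes u :: "nat \<Rightarrow> real"
  assumes "\<omega> \<in> space M"
  shows "(\<Sum>i=1..n. indicator (in_S i) \<omega> * u i) = (\<Sum>i\<in>S \<omega>. u i)"
    and "(\<Sum>i=1..n. indicator (space M - in_S i) \<omega> * u i) = (\<Sum>i\<in>{1..n} - S \<omega>. u i)"
proof -
  have "(\<Sum>i=1..n. indicator (in_S i) \<omega> * u i) = (\<Sum>i=1..n. if i \<in> S \<omega> then u i else 0)"
    using assms by (intro sum.cong) (auto simp: in_S_def)
  also have "\<dots> = (\<Sum>i\<in>S \<omega>. u i)"
    using S_subset[OF assms] by (simp add: sum.inter_restrict[symmetric] Int_absorb1)
  finally show "(\<Sum>i=1..n. indicator (in_S i) \<omega> * u i) = (\<Sum>i\<in>S \<omega>. u i)" .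
  have "(\<Sum>i=1..n. indicator (space M - in_S i) \<omega> * u i) = (\<Sum>i=1..n. if i \<in> - S \<omega> then u i else 0)"
    using assms by (intro sum.cong) (auto simp: in_S_def)
  also have "\<dots> = (\<Sum>i\<in>{1..n} - S \<omega>. u i)"
    by (simp only: Diff_eq sum.inter_restrict[OF finite_atLeastAtMost])
  finally show "(\<Sum>i=1..n. indicator (space M - in_S i) \<omega> * u i) = (\<Sum>i\<in>{1..n} - S \<omega>. u i)" .
qed

lemma subalgebra_sigma_units: "subalgebra M sigma_units"
  using switch.sets_G by (simp add: subalgebra_def)

lemma sigma_finite_sigma_gen:
  assumes "I \<subseteq> {1..n}"
  shows "sigma_finite_subalgebra M (sigma_gen M X borel I)"
proof -
  have "X i \<in> borel_measurable M" if "i \<in> I" for i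
    using assms that by (intro measurable_from_subalg[OF subalgebra_sigma_units measurable_unit(3)]) auto
  then show ?thesis
    by (intro sigma_finite_subalgebraI) (simp add: subalgebra_def sets_sigma_gen_subset)
qed

lemma cond_exp_outcomes_sigma_X:
  "AE \<omega> in M. \<forall>i\<in>{1..n}.
      real_cond_exp M sigma_X (Y1 i) \<omega> = real_cond_exp M (sigma_gen M X borel {i}) (Y1 i) \<omega>
    \<and> real_cond_exp M sigma_X (Y0 i) \<omega> = real_cond_exp M (sigma_gen M X borel {i}) (Y0 i) \<omega>"
proof (intro AE_finite_allI finite_atLeastAtMost AE_conjI)
  fix i assume i: "i \<in> {1..n}"
  have unit: "Y1 j \<in> borel_measurable (vimage_algebra (space M) (\<lambda>\<omega>. (Y1 j \<omega>, Y0 j \<omega>, X j \<omega>)) borel)"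
    "Y0 j \<in> borel_measurable (vimage_algebra (space M) (\<lambda>\<omega>. (Y1 j \<omega>, Y0 j \<omega>, X j \<omega>)) borel)"
    "X j \<in> measurable (vimage_algebra (space M) (\<lambda>\<omega>. (Y1 j \<omega>, Y0 j \<omega>, X j \<omega>)) borel) borel" for j
    using measurable_triple_components[OF measurable_vimage_algebra1, of "\<lambda>\<omega>. (Y1 j \<omega>, Y0 j \<omega>, X j \<omega>)"]
    by simp_all
  show "AE \<omega> in M. real_cond_exp M sigma_X (Y1 i) \<omega> = real_cond_exp M (sigma_gen M X borel {i}) (Y1 i) \<omega>"
    "AE \<omega> in M. real_cond_exp M sigma_X (Y0 i) \<omega> = real_cond_exp M (sigma_gen M X borel {i}) (Y0 i) \<omega>"
    by (rule real_cond_exp_sigma_gen_indep_vars[OF indep_units i unit(3)];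
        use i integrable_outcomes unit in auto)+
qed

lemma cond_exp_indicator_outcome_sums:
  assumes A: "\<And>i. A i \<in> {in_S i, space M - in_S i}" and B: "\<And>i. B i \<in> {in_S i, space M - in_S i}"
  shows "AE \<omega> in M. real_cond_exp M sigma_X
      (\<lambda>\<omega>. 2 / real n * ((\<Sum>i=1..n. indicator (A i) \<omega> * Y1 i \<omega>) - (\<Sum>i=1..n. indicator (B i) \<omega> * Y0 i \<omega>))) \<omega>
    = 2 / real n * ((\<Sum>i=1..n. indicator (A i) \<omega> * real_cond_exp M sigma_X (Y1 i) \<omega>)
      - (\<Sum>i=1..n. indicator (B i) \<omega> * real_cond_exp M sigma_X (Y0 i) \<omega>))"
proof -
  have int: "integrable M (\<lambda>\<omega>. \<Sum>i=1..n. indicator (A i) \<omega> * Y1 i \<omega>)"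
    "integrable M (\<lambda>\<omega>. \<Sum>i=1..n. indicator (B i) \<omega> * Y0 i \<omega>)"
    by (intro Bochner_Integration.integrable_sum integrable_indicator_outcome A B; simp)+
  have indicator_meas: "(indicator C :: 'a \<Rightarrow> real) \<in> borel_measurable sigma_X"
    if "i \<in> {1..n}" "C \<in> {in_S i, space M - in_S i}" for C i
    using measurable_indicator_in_S[OF that(1)] that(2) by auto
  have Y_meas: "Y1 i \<in> borel_measurable M" "Y0 i \<in> borel_measurable M" if "i \<in> {1..n}" for i
    using integrable_outcomes that by auto
  have "AE \<omega> in M. real_cond_exp M sigma_X
      (\<lambda>\<omega>. 2 / real n * ((\<Sum>i=1..n. indicator (A i) \<omega> * Y1 i \<omega>) - (\<Sum>i=1..n. indicator (B i) \<omega> * Y0 i \<omega>))) \<omega>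
    = 2 / real n * real_cond_exp M sigma_X
      (\<lambda>\<omega>. (\<Sum>i=1..n. indicator (A i) \<omega> * Y1 i \<omega>) - (\<Sum>i=1..n. indicator (B i) \<omega> * Y0 i \<omega>)) \<omega>"
    using int by (intro switch.F.real_cond_exp_cmult) auto
  moreover have "AE \<omega> in M. real_cond_exp M sigma_X
      (\<lambda>\<omega>. (\<Sum>i=1..n. indicator (A i) \<omega> * Y1 i \<omega>) - (\<Sum>i=1..n. indicator (B i) \<omega> * Y0 i \<omega>)) \<omega>
    = real_cond_exp M sigma_X (\<lambda>\<omega>. \<Sum>i=1..n. indicator (A i) \<omega> * Y1 i \<omega>) \<omega>
      - real_cond_exp M sigma_X (\<lambda>\<omega>. \<Sum>i=1..n. indicator (B i) \<omega> * Y0 i \<omega>) \<omega>"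
    using int by (rule switch.F.real_cond_exp_diff)
  moreover have "AE \<omega> in M. real_cond_exp M sigma_X (\<lambda>\<omega>. \<Sum>i=1..n. indicator (A i) \<omega> * Y1 i \<omega>) \<omega>
      = (\<Sum>i=1..n. indicator (A i) \<omega> * real_cond_exp M sigma_X (Y1 i) \<omega>)"
    using A indicator_meas Y_meas integrable_indicator_outcome by (intro switch.F.real_cond_exp_sum_mult) auto
  moreover have "AE \<omega> in M. real_cond_exp M sigma_X (\<lambda>\<omega>. \<Sum>i=1..n. indicator (B i) \<omega> * Y0 i \<omega>) \<omega>
      = (\<Sum>i=1..n. indicator (B i) \<omega> * real_cond_exp M sigma_X (Y0 i) \<omega>)"
    using B indicator_meas Y_meas integrable_indicator_outcome by (intro switch.F.real_cond_exp_sum_mult) auto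
  ultimately show ?thesis
    by eventually_elim simp
qed

lemma cond_exp_tau_hat_S:
  "AE \<omega> in M. real_cond_exp M sigma_X tau_hat_S \<omega> = 2 / real n *
      ((\<Sum>i\<in>S \<omega>. real_cond_exp M (sigma_gen M X borel {i}) (Y1 i) \<omega>)
       - (\<Sum>i\<in>{1..n} - S \<omega>. real_cond_exp M (sigma_gen M X borel {i}) (Y0 i) \<omega>))
    \<and> real_cond_exp M sigma_X tau_hat_Sc \<omega> = 2 / real n *
      ((\<Sum>i\<in>{1..n} - S \<omega>. real_cond_exp M (sigma_gen M X borel {i}) (Y1 i) \<omega>)
       - (\<Sum>i\<in>S \<omega>. real_cond_exp M (sigma_gen M X borel {i}) (Y0 i) \<omega>))"
proof -
  have in_S_choices: "in_S i \<in> {in_S i, space M - in_S i}" "space M - in_S i \<in> {in_S i, space M - in_S i}"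
    for i by simp_all
  from cond_exp_outcomes_sigma_X cond_exp_indicator_outcome_sums[OF in_S_choices(1) in_S_choices(2)]
    cond_exp_indicator_outcome_sums[OF in_S_choices(2) in_S_choices(1)] AE_space
  show ?thesis
    unfolding tau_hat_S_def[abs_def] tau_hat_Sc_def[abs_def]
  proof eventually_elim
    case (elim \<omega>)
    have cond_exp_outcomes: "(\<Sum>i=1..n. indicator (C i) \<omega> * real_cond_exp M sigma_X (Y1 i) \<omega>)
        = (\<Sum>i=1..n. indicator (C i) \<omega> * real_cond_exp M (sigma_gen M X borel {i}) (Y1 i) \<omega>)"
      "(\<Sum>i=1..n. indicator (C i) \<omega> * real_cond_exp M sigma_X (Y0 i) \<omega>)
        = (\<Sum>i=1..n. indicator (C i) \<omega> * real_cond_exp M (sigma_gen M X borel {i}) (Y0 i) \<omega>)"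
      for C :: "nat \<Rightarrow> 'a set"
      using elim(1) by (auto intro!: sum.cong)
    show ?case
      unfolding elim(2,3) cond_exp_outcomes unfolding sum_indicator_in_S[OF elim(4)] by simp
  qed
qed

lemma cond_exp_unit_sum_diff:
  "AE \<omega> in M. \<forall>i\<in>{1..n}.
      real_cond_exp M (sigma_gen M X borel {i}) (\<lambda>\<omega>. Y1 i \<omega> + Y0 i \<omega>) \<omega>
        = real_cond_exp M (sigma_gen M X borel {i}) (Y1 i) \<omega> + real_cond_exp M (sigma_gen M X borel {i}) (Y0 i) \<omega>
    \<and> real_cond_exp M (sigma_gen M X borel {i}) (\<lambda>\<omega>. Y1 i \<omega> - Y0 i \<omega>) \<omega>
        = real_cond_exp M (sigma_gen M X borel {i}) (Y1 i) \<omega> - real_cond_exp M (sigma_gen M X borel {i}) (Y0 i) \<omega>"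
proof (intro AE_finite_allI finite_atLeastAtMost)
  fix i assume i: "i \<in> {1..n}"
  interpret Xi: sigma_finite_subalgebra M "sigma_gen M X borel {i}"
    using i by (intro sigma_finite_sigma_gen) simp
  show "AE \<omega> in M. real_cond_exp M (sigma_gen M X borel {i}) (\<lambda>\<omega>. Y1 i \<omega> + Y0 i \<omega>) \<omega>
        = real_cond_exp M (sigma_gen M X borel {i}) (Y1 i) \<omega> + real_cond_exp M (sigma_gen M X borel {i}) (Y0 i) \<omega>
    \<and> real_cond_exp M (sigma_gen M X borel {i}) (\<lambda>\<omega>. Y1 i \<omega> - Y0 i \<omega>) \<omega>
        = real_cond_exp M (sigma_gen M X borel {i}) (Y1 i) \<omega> - real_cond_exp M (sigma_gen M X borel {i}) (Y0 i) \<omega>"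
    using integrable_outcomes i by (intro AE_conjI Xi.real_cond_exp_add Xi.real_cond_exp_diff) auto
qed

lemma balanced_cond_exp_tau_hat:
  "AE \<omega> in M. (\<Sum>i\<in>S \<omega>. real_cond_exp M (sigma_gen M X borel {i}) (\<lambda>\<omega>. Y1 i \<omega> + Y0 i \<omega>) \<omega>)
      = (\<Sum>i\<in>{1..n} - S \<omega>. real_cond_exp M (sigma_gen M X borel {i}) (\<lambda>\<omega>. Y1 i \<omega> + Y0 i \<omega>) \<omega>) \<longrightarrow>
    real_cond_exp M sigma_X tau_hat_S \<omega> = real_cond_exp M sigma_X tau_hat_Sc \<omega>
    \<and> real_cond_exp M sigma_X tau_hat_S \<omega>
      = 1 / real n * (\<Sum>i=1..n. real_cond_exp M (sigma_gen M X borel {i}) (\<lambda>\<omega>. Y1 i \<omega> - Y0 i \<omega>) \<omega>)"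
  using cond_exp_tau_hat_S AE_space cond_exp_unit_sum_diff
proof eventually_elim
  case (elim \<omega>)
  define m1 where "m1 i = real_cond_exp M (sigma_gen M X borel {i}) (Y1 i) \<omega>" for i
  define m0 where "m0 i = real_cond_exp M (sigma_gen M X borel {i}) (Y0 i) \<omega>" for i
  note S_\<omega> = S_subset[OF elim(2)]
  have E: "real_cond_exp M sigma_X tau_hat_S \<omega> = 2 / real n * ((\<Sum>i\<in>S \<omega>. m1 i) - (\<Sum>i\<in>{1..n} - S \<omega>. m0 i))"
    "real_cond_exp M sigma_X tau_hat_Sc \<omega> = 2 / real n * ((\<Sum>i\<in>{1..n} - S \<omega>. m1 i) - (\<Sum>i\<in>S \<omega>. m0 i))"
    using elim(1) unfolding m1_def m0_def by blast+
  have sum_g: "(\<Sum>i\<in>T. real_cond_exp M (sigma_gen M X borel {i}) (\<lambda>\<omega>. Y1 i \<omega> + Y0 i \<omega>) \<omega>)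
      = (\<Sum>i\<in>T. m1 i + m0 i)" if "T \<subseteq> {1..n}" for T
    using elim(3) that unfolding m1_def m0_def by (intro sum.cong) auto
  have sum_d: "(\<Sum>i=1..n. real_cond_exp M (sigma_gen M X borel {i}) (\<lambda>\<omega>. Y1 i \<omega> - Y0 i \<omega>) \<omega>)
      = (\<Sum>i=1..n. m1 i - m0 i)"
    using elim(3) unfolding m1_def m0_def by (intro sum.cong) auto
  show ?case
    unfolding sum_g[OF S_\<omega>] sum_g[OF Diff_subset] sum_d
  proof
    assume "(\<Sum>i\<in>S \<omega>. m1 i + m0 i) = (\<Sum>i\<in>{1..n} - S \<omega>. m1 i + m0 i)"
    note sums = balanced_sums[OF finite_atLeastAtMost S_\<omega> this]
    have "real_cond_exp M sigma_X tau_hat_S \<omega>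
        = 1 / real n * (2 * ((\<Sum>i\<in>S \<omega>. m1 i) - (\<Sum>i\<in>{1..n} - S \<omega>. m0 i)))"
      unfolding E by simp
    also have "\<dots> = 1 / real n * (\<Sum>i=1..n. m1 i - m0 i)"
      unfolding sums(2) ..
    finally show "real_cond_exp M sigma_X tau_hat_S \<omega> = real_cond_exp M sigma_X tau_hat_Sc \<omega>
        \<and> real_cond_exp M sigma_X tau_hat_S \<omega> = 1 / real n * (\<Sum>i=1..n. m1 i - m0 i)"
      unfolding E sums(1) by simp
  qed
qed

lemma cond_exp_tau_hat_sigma_XZ:
  "AE \<omega> in M. real_cond_exp M sigma_XZ tau_hat_design \<omega>
    = indicator Zstar \<omega> * real_cond_exp M sigma_X tau_hat_S \<omega>
      + indicator (space M - Zstar) \<omega> * real_cond_exp M sigma_X tau_hat_Sc \<omega>"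
  unfolding sigma_design
  by (rule switch.real_cond_exp_switch[OF measurable_tau_hat_S_Sc(1) integrable_tau_hat_S_Sc(1)
        measurable_tau_hat_S_Sc(2) integrable_tau_hat_S_Sc(2) tau_hat_switch])

lemma Zstar_compl: "space M - Zstar \<in> sets sigma_Zstar" "prob (space M - Zstar) = 1 / 2"
  using Zstar_in_sigma_Zstar sets.compl_sets[of Zstar sigma_Zstar] space_sigma_Zstar
    prob_compl[of Zstar] prob_Zstar switch.sets_H by auto

lemma tau_hat_design_on_Zstar:
  "\<omega> \<in> Zstar \<Longrightarrow> tau_hat_design \<omega> = tau_hat_S \<omega>"
  "\<omega> \<in> space M - Zstar \<Longrightarrow> tau_hat_design \<omega> = tau_hat_Sc \<omega>"
  by (auto simp: tau_hat_switch Zstar_def)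

lemma cond_exp_on_assignment_events:
  "AE \<omega> in M. cond_exp_on_event M sigma_X
      {\<omega> \<in> space M. \<forall>i\<in>{1..n}. design_Z Zs S i \<omega> = of_bool (i \<in> S \<omega>)} tau_hat_design \<omega>
    = real_cond_exp M sigma_X tau_hat_S \<omega>"
  and cond_exp_on_assignment_events_compl:
  "AE \<omega> in M. cond_exp_on_event M sigma_X
      {\<omega> \<in> space M. \<forall>i\<in>{1..n}. design_Z Zs S i \<omega> = 1 - of_bool (i \<in> S \<omega>)} tau_hat_design \<omega>
    = real_cond_exp M sigma_X tau_hat_Sc \<omega>"
proof -
  show "AE \<omega> in M. cond_exp_on_event M sigma_X
      {\<omega> \<in> space M. \<forall>i\<in>{1..n}. design_Z Zs S i \<omega> = of_bool (i \<in> S \<omega>)} tau_hat_design \<omega>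
    = real_cond_exp M sigma_X tau_hat_S \<omega>"
    unfolding assignment_event_S
    by (rule switch.cond_exp_on_event_switch[OF Zstar_in_sigma_Zstar _ measurable_tau_hat_S_Sc(1)
          integrable_tau_hat_S_Sc(1) tau_hat_design_on_Zstar(1)]) (simp add: prob_Zstar)
  show "AE \<omega> in M. cond_exp_on_event M sigma_X
      {\<omega> \<in> space M. \<forall>i\<in>{1..n}. design_Z Zs S i \<omega> = 1 - of_bool (i \<in> S \<omega>)} tau_hat_design \<omega>
    = real_cond_exp M sigma_X tau_hat_Sc \<omega>"
    unfolding assignment_event_Sc
    by (rule switch.cond_exp_on_event_switch[OF Zstar_compl(1) _ measurable_tau_hat_S_Sc(2)
          integrable_tau_hat_S_Sc(2) tau_hat_design_on_Zstar(2)]) (simp add: Zstar_compl(2))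
qed

lemma cond_var_tau_hat:
  "AE \<omega> in M. cond_var M sigma_X (real_cond_exp M sigma_XZ tau_hat_design) \<omega>
    = ((real_cond_exp M sigma_X tau_hat_S \<omega> - real_cond_exp M sigma_X tau_hat_Sc \<omega>) / 2)\<^sup>2"
proof -
  have "AE \<omega> in M. cond_var M sigma_X (real_cond_exp M sigma_XZ tau_hat_design) \<omega>
      = cond_var M sigma_X (\<lambda>\<omega>. indicator Zstar \<omega> * real_cond_exp M sigma_X tau_hat_S \<omega>
        + indicator (space M - Zstar) \<omega> * real_cond_exp M sigma_X tau_hat_Sc \<omega>) \<omega>"
    using cond_exp_tau_hat_sigma_XZ Zstar_in_sigma_Zstar Zstar_compl(1) switch.sets_H
    by (intro switch.F.cond_var_cong) auto
  moreover have "AE \<omega> in M. cond_var M sigma_X (\<lambda>\<omega>. indicator Zstar \<omega> * real_cond_exp M sigma_X tau_hat_S \<omega>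
        + indicator (space M - Zstar) \<omega> * real_cond_exp M sigma_X tau_hat_Sc \<omega>) \<omega>
      = ((real_cond_exp M sigma_X tau_hat_S \<omega> - real_cond_exp M sigma_X tau_hat_Sc \<omega>) / 2)\<^sup>2"
    using prob_Zstar switch.F.real_cond_exp_int(1)[OF integrable_tau_hat_S_Sc(1)]
      switch.F.real_cond_exp_int(1)[OF integrable_tau_hat_S_Sc(2)]
    by (intro switch.cond_var_switch) simp_all
  ultimately show ?thesis
    by eventually_elim simp
qed

end

theorem proposition1:
  fixes M :: "'a measure" and n :: nat
    and Y1 Y0 :: "nat \<Rightarrow> 'a \<Rightarrow> real" and X :: "nat \<Rightarrow> 'a \<Rightarrow> real ^ 'd"
    and Zs :: "'a \<Rightarrow> bool" and S :: "'a \<Rightarrow> nat set"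
  defines "g \<equiv> \<lambda>i. real_cond_exp M (sigma_gen M X borel {i}) (\<lambda>\<omega>. Y1 i \<omega> + Y0 i \<omega>)"
    and "FX \<equiv> sigma_gen M X borel {1..n}"
    and "FXZ \<equiv> sigma (space M) (gen_sets M X borel {1..n} \<union> gen_sets M (design_Z Zs S) borel {1..n})"
    and "tauhat \<equiv> tau_hat n (obs_Y Y1 Y0 (design_Z Zs S)) (design_Z Zs S)"
    and "tau \<equiv> \<lambda>\<omega>. 1 / real n * (\<Sum>i=1..n. real_cond_exp M (sigma_gen M X borel {i}) (\<lambda>\<omega>. Y1 i \<omega> - Y0 i \<omega>) \<omega>)"
    and "Ez \<equiv> {\<omega> \<in> space M. \<forall>i\<in>{1..n}. design_Z Zs S i \<omega> = of_bool (i \<in> S \<omega>)}"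
    and "Ez' \<equiv> {\<omega> \<in> space M. \<forall>i\<in>{1..n}. design_Z Zs S i \<omega> = 1 - of_bool (i \<in> S \<omega>)}"
  assumes "prob_space M"
    and "n \<ge> 1"
    and iid_indep: "prob_space.indep_vars M (\<lambda>_. borel) (\<lambda>i \<omega>. (Y1 i \<omega>, Y0 i \<omega>, X i \<omega>)) {1..n}"
    and iid_ident: "\<forall>i\<in>{1..n}. distr M borel (\<lambda>\<omega>. (Y1 i \<omega>, Y0 i \<omega>, X i \<omega>))
                              = distr M borel (\<lambda>\<omega>. (Y1 1 \<omega>, Y0 1 \<omega>, X 1 \<omega>))"
    and finite_means: "\<forall>i\<in>{1..n}. integrable M (Y1 i) \<and> integrable M (Y0 i)"
    and Zs_indep: "prob_space.indep_set M (sets (vimage_algebra (space M) Zs (count_space UNIV)))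
                     (sets (vimage_algebra (space M)
                        (\<lambda>\<omega>. \<lambda>i\<in>{1..n}. (Y1 i \<omega>, Y0 i \<omega>, X i \<omega>)) (PiM {1..n} (\<lambda>_. borel))))"
    and Zs_bern: "measure M {\<omega> \<in> space M. Zs \<omega>} = 1 / 2"
    and S_meas: "\<forall>i\<in>{1..n}. {\<omega> \<in> space M. i \<in> S \<omega>} \<in> sets FX"
    and S_opt: "\<forall>\<omega>\<in>space M. S \<omega> \<subseteq> {1..n}
                  \<and> (\<Sum>i\<in>S \<omega>. g i \<omega>) \<le> 1 / 2 * (\<Sum>i=1..n. g i \<omega>)
                  \<and> (\<forall>T \<subseteq> {1..n}. (\<Sum>i\<in>T. g i \<omega>) \<le> 1 / 2 * (\<Sum>i=1..n. g i \<omega>)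
                         \<longrightarrow> (\<Sum>i\<in>T. g i \<omega>) \<le> (\<Sum>i\<in>S \<omega>. g i \<omega>))"
  shows "AE \<omega> in M. (\<Sum>i\<in>S \<omega>. g i \<omega>) = (\<Sum>i\<in>{1..n} - S \<omega>. g i \<omega>) \<longrightarrow>
           cond_exp_on_event M FX Ez tauhat \<omega> = cond_exp_on_event M FX Ez' tauhat \<omega>
         \<and> cond_var M FX (real_cond_exp M FXZ tauhat) \<omega> = 0
         \<and> real_cond_exp M FXZ tauhat \<omega> = tau \<omega>"
proof -
  interpret paired_design M n Y1 Y0 X Zs S
    using assms(8-10,12-14) S_meas[unfolded assms(2)] S_opt
    by (intro paired_design.intro paired_design_axioms.intro) auto
  from cond_exp_on_assignment_events cond_exp_on_assignment_events_compl cond_var_tau_hat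
    cond_exp_tau_hat_sigma_XZ balanced_cond_exp_tau_hat AE_space
  show ?thesis
    unfolding assms(1-7) by eventually_elim (auto simp: indicator_def)
qed

end
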